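(* Let $\lambda>0$, $f:\mathbb{R}^n\to\mathbb{R}$ twice continuously differentiable, $\varphi=f+\lambda\|\cdot\|_1$, and $x^0$ with $\mathcal{L}_\varphi(x^0)$ bounded and $f$ twice uniformly Lipschitz continuously differentiable on an open neighborhood of it. Suppose that at iteration $k$ of PGN2CM (described in the context) a Newton-CG step is invoked and the Capped CG method returns $d_{\rm type}=\mathrm{NC}$. Then $j_k<+\infty$ and $$\varphi(x^k)-\varphi(x^{k+1})\ge c_{nc}\min\{\varepsilon_g\varepsilon_h,\varepsilon_h^3\},\qquad c_{nc}=\eta\theta^2\min\Big\{1,\frac{9(1-2\eta)^2}{L_H^2}\Big\}.$$
   Context: Constants: $L_g,L_H>0$ with, for $x,y\in\mathcal{L}_\varphi(x^0)=\{x:\varphi(x)\le\varphi(x^0)\}$, $\|\nabla^2f(x)\|\le L_g$ and $f(y)\le f(x)+\nabla f(x)^\top(y-x)+\frac12(y-x)^\top\nabla^2f(x)(y-x)+\frac{L_H}6\|y-x\|^3$. $\mathrm{sgn}(0)=1$. For $x$: $I^\varepsilon_0=\{i:|x_i|\le\varepsilon_g^{1/2}\}$, $I^\varepsilon_{\neq0}=\{i:|x_i|>\varepsilon_g^{1/2}\}$; $g^\varepsilon(x)_i=(\nabla f(x))_i+\lambda$ if $x_i>\varepsilon_g^{1/2}$, $(\nabla f(x))_i-\lambda$ if $x_i<-\varepsilon_g^{1/2}$, $(\nabla f(x))_i-\min\{\max\{-\lambda-\varepsilon_g^{3/4},(\nabla f(x))_i\},\lambda+\varepsilon_g^{3/4}\}$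 otherwise. Capped CG (inputs symmetric $H$, $g$, $\epsilon$, $\zeta\in(0,1)$, $\delta$, $\bar\tau$, $M\ge0$): $\bar H=H+\bar\tau\|g\|^\delta I$, $\kappa=\frac{M+\bar\tau\|g\|^\delta}\epsilon$, $\hat\zeta=\frac\zeta{3\kappa}$, $\tau=\frac{\sqrt\kappa}{\sqrt\kappa+1}$, $T=\frac{4\kappa^4}{(1-\sqrt\tau)^2}$, $y_0=0,r_0=g,p_0=-g$; if $p_0^\top\bar Hp_0<\epsilon\|p_0\|^2$ return $(p_0,\mathrm{NC})$; if $\|Hp_0\|>M\|p_0\|$ update $M=\|Hp_0\|/\|p_0\|$ and $\kappa,\hat\zeta,\tau,T$. Loop: $\alpha_j=\|r_j\|^2/p_j^\top\bar Hp_j$, $y_{j+1}=y_j+\alpha_jp_j$, $r_{j+1}=r_j+\alpha_j\bar Hp_j$, $\beta_{j+1}=\|r_{j+1}\|^2/\|r_j\|^2$, $p_{j+1}=-r_{j+1}+\beta_{j+1}p_j$, $j\leftarrow j+1$; update $M$ (and dependent quantities) whenever $\|Hv\|>M\|v\|$ for $v\in\{p_j,y_j,r_j\}$; then if $y_j^\top\bar Hy_j<\epsilon\|y_j\|^2$ return $(y_j,\mathrm{NC})$; elif $\|r_j\|\le\hat\zeta\|r_0\|$ return $(y_j,\mathrm{SOL})$; elif $p_j^\top\bar Hp_j<\epsilon\|p_j\|^2$ return $(p_j,\mathrm{NC})$; elif $\|r_j\|>\sqrt T\tau^{j/2}\|r_0\|$, compute $y_{j+1}$, find $i<j$ with $(y_{j+1}-y_i)^\top\bar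 H(y_{j+1}-y_i)<\epsilon\|y_{j+1}-y_i\|^2$ and return $(y_{j+1}-y_i,\mathrm{NC})$. Newton-CG step of PGN2CM (parameters $0<\varepsilon_g,\varepsilon_h<1$, $\delta\in[0,1]$, $\hat\tau\ge1$, $\zeta\in(0,1)$, $\eta\in(0,\frac{1-\zeta}2)$, $\theta\in(0,1)$), invoked at $x^k$ when [$I^\varepsilon_0(x^k)=\emptyset$ or $g^\varepsilon(x^k)$ vanishes on $I^\varepsilon_0(x^k)$], $I^\varepsilon_{\neq0}(x^k)\neq\emptyset$ and $\|g^\varepsilon(x^k)_{I^\varepsilon_{\neq0}(x^k)}\|>\varepsilon_g$: with $H^k_{\neq0\varepsilon}=(\nabla^2f(x^k))_{I^\varepsilon_{\neq0}(x^k)}$, $g^k_{\neq0\varepsilon}=g^\varepsilon(x^k)_{I^\varepsilon_{\neq0}(x^k)}$, $\tau_k\in[\frac{2\varepsilon_h}{\|g^k_{\neq0\varepsilon}\|^\delta},\frac{2\hat\tau\varepsilon_h}{\|g^k_{\neq0\varepsilon}\|^\delta}]$, call Capped CG$(H^k_{\neq0\varepsilon},g^k_{\neq0\varepsilon},\varepsilon_h,\zeta,\delta,\tau_k,M)$ to get $(d,d_{\rm type})$; set $d^k=0$ on $I^\varepsilon_0(x^k)$ and $d^k_{I^\varepsilon_{\neq0}(x^k)}=-\mathrm{sgn}(d^\top g^k_{\neq0\varepsilon})\frac{|d^\top H^k_{\neq0\varepsilon}d|}{\|d\|^2}\frac d{\|d\|}$ if $d_{\rm type}=\mathrm{NC}$,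 $=d$ if SOL; $x^{k+1}=x^k+\theta^{j_k}d^k$ with $j_k$ the smallest nonnegative integer $j$ such that $\varphi(x^k+\theta^jd^k)<\varphi(x^k)-\eta\theta^{2j}\varepsilon_h\|d^k\|^2$. The iterates lie in $\mathcal{L}_\varphi(x^0)$. *)

theory Defs
  imports "HOL-Analysis.Analysis"
begin

text \<open>A sub-vector indexed by a set I of coordinates
  (an element of R^|I|) is modelled by the vector of R^n that vanishes outside I; the
  principal submatrix H_I acts on such vectors through sub_op.\<close>

datatype cg_type = NC | SOL

definition sgn1 :: "real \<Rightarrow> real" where
  "sgn1 t = (if t \<ge> 0 then 1 else -1)"

definition l1norm :: "real^'n \<Rightarrow> real" where
  "l1norm x = (\<Sum>i\<in>UNIV. \<bar>x$i\<bar>)"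

definition level_set :: "(real^'n \<Rightarrow> real) \<Rightarrow> real^'n \<Rightarrow> (real^'n) set" where
  "level_set phi x0 = {x. phi x \<le> phi x0}"

definition I0eps :: "real \<Rightarrow> real^'n \<Rightarrow> 'n set" where
  "I0eps eg x = {i. \<bar>x$i\<bar> \<le> sqrt eg}"

definition Inzeps :: "real \<Rightarrow> real^'n \<Rightarrow> 'n set" where
  "Inzeps eg x = {i. \<bar>x$i\<bar> > sqrt eg}"

definition geps :: "(real^'n \<Rightarrow> real^'n) \<Rightarrow> real \<Rightarrow> real \<Rightarrow> real^'n \<Rightarrow> real^'n" where
  "geps gf lam eg x = (\<chi> i. if x$i > sqrt eg then gf x $ i + lam
      else if x$i < - sqrt eg then gf x $ i - lam
      else gf x $ i - min (max (- lam - eg powr (3/4)) (gf x $ i)) (lam + eg powr (3/4)))"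

definition restrict_vec :: "'n set \<Rightarrow> real^'n \<Rightarrow> real^'n" where
  "restrict_vec I v = (\<chi> i. if i \<in> I then v$i else 0)"

definition sub_op :: "real^'n^'n \<Rightarrow> 'n set \<Rightarrow> real^'n \<Rightarrow> real^'n" where
  "sub_op H I v = restrict_vec I (H *v restrict_vec I v)"

text \<open>CG iterates (y_j, r_j, p_j) for the shifted operator Hb (they do not depend on M).\<close>
fun ccg_iter :: "(real^'n \<Rightarrow> real^'n) \<Rightarrow> real^'n \<Rightarrow> nat \<Rightarrow> (real^'n) \<times> (real^'n) \<times> (real^'n)" where
  "ccg_iter Hb g 0 = (0, g, - g)"
| "ccg_iter Hb g (Suc j) = (case ccg_iter Hb g j of (y, r, p) \<Rightarrow>
     let a = (norm r)^2 / (p \<bullet> Hb p); y' = y + a *\<^sub>R p; r' = r + a *\<^sub>R Hb p;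
         b = (norm r')^2 / (norm r)^2 in (y', r', - r' + b *\<^sub>R p))"

definition M_upd :: "(real^'n \<Rightarrow> real^'n) \<Rightarrow> real \<Rightarrow> real^'n \<Rightarrow> real" where
  "M_upd H M v = (if norm (H v) > M * norm v then norm (H v) / norm v else M)"

text \<open>Value of M after iteration j (after the updates with p_j, y_j, r_j).\<close>
fun ccg_M :: "(real^'n \<Rightarrow> real^'n) \<Rightarrow> (real^'n \<Rightarrow> real^'n) \<Rightarrow> real^'n \<Rightarrow> real \<Rightarrow> nat \<Rightarrow> real" where
  "ccg_M H Hb g M0 0 = M_upd H M0 (- g)"
| "ccg_M H Hb g M0 (Suc j) = (case ccg_iter Hb g (Suc j) of (y, r, p) \<Rightarrow>
     M_upd H (M_upd H (M_upd H (ccg_M H Hb g M0 j) p) y) r)"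

text \<open>capped_cg H g eps zeta delta taubar M d dt: Capped CG on input (H,g,eps,zeta,delta,taubar,M)
  returns (d, dt). The choice of i in the last branch is nondeterministic (any valid i).\<close>
definition capped_cg :: "(real^'n \<Rightarrow> real^'n) \<Rightarrow> real^'n \<Rightarrow> real \<Rightarrow> real \<Rightarrow> real \<Rightarrow> real \<Rightarrow> real
    \<Rightarrow> real^'n \<Rightarrow> cg_type \<Rightarrow> bool" where
  "capped_cg H g eps zeta delta taubar M d dt \<longleftrightarrow>
   (let Hb = (\<lambda>v. H v + (taubar * norm g powr delta) *\<^sub>R v);
        Y = (\<lambda>j. fst (ccg_iter Hb g j));
        R = (\<lambda>j. fst (snd (ccg_iter Hb g j)));
        P = (\<lambda>j. snd (snd (ccg_iter Hb g j)));
        kap = (\<lambda>j. (ccg_M H Hb g M j + taubar * norm g powr delta) / eps);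
        zh = (\<lambda>j. zeta / (3 * kap j));
        tau = (\<lambda>j. sqrt (kap j) / (sqrt (kap j) + 1));
        T = (\<lambda>j. 4 * (kap j)^4 / (1 - sqrt (tau j))^2);
        curv = (\<lambda>v. v \<bullet> Hb v < eps * (norm v)^2);
        t1 = (\<lambda>j. curv (Y j));
        t2 = (\<lambda>j. norm (R j) \<le> zh j * norm (R 0));
        t3 = (\<lambda>j. curv (P j));
        t4 = (\<lambda>j. norm (R j) > sqrt (T j) * tau j powr (real j / 2) * norm (R 0))
    in if curv (P 0) then (d = P 0 \<and> dt = NC)
       else (\<exists>j\<ge>1. (\<forall>i. 1 \<le> i \<and> i < j \<longrightarrow> \<not> (t1 i \<or> t2 i \<or> t3 i \<or> t4 i)) \<and>
          (if t1 j then d = Y j \<and> dt = NC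
           else if t2 j then d = Y j \<and> dt = SOL
           else if t3 j then d = P j \<and> dt = NC
           else t4 j \<and> dt = NC \<and> (\<exists>i<j. curv (Y (Suc j) - Y i) \<and> d = Y (Suc j) - Y i))))"

end

(* The Capped CG shift tauk ||gk||^delta is at least 2 eh, so the returned direction has
   d' H d < -eh ||d||^2; after rescaling, dk satisfies ||dk|| > eh, dk' H dk = -||dk||^3 and
   gk' dk <= 0.  As long as s ||dk|| <= sqrt eg no coordinate in I changes sign, so phi is smooth
   along the segment with slope gk' dk <= 0 at xk, and the cubic upper bound gives
   phi (xk + s dk) < phi xk - eta s^2 ||dk||^3 for s < 3 (1 - 2 eta) / LH.  That bound needs
   xk + s dk in the level set; phi cannot climb back to phi xk on the segment, because at the
   first such point the bound would already force a strict decrease.  Hence every trial step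
   below T = min (sqrt eg / ||dk||) (3 (1 - 2 eta) / LH) is accepted, so jk is finite, and
   theta^(jk - 1) >= T unless jk = 0; both cases give the claimed decrease. *)

theory Submission
  imports Defs
begin

lemma DERIV_second_neg_imp_less_right:
  fixes h h' :: "real \<Rightarrow> real"
  assumes deriv: "\<And>s. (h has_real_derivative h' s) (at s)"
    and deriv2: "(h' has_real_derivative h'') (at 0)" and "h'' < 0" and "h' 0 \<le> 0"
  obtains \<delta> where "\<delta> > 0" "\<And>u. 0 < u \<Longrightarrow> u < \<delta> \<Longrightarrow> h u < h 0"
proof -
  obtain \<delta> where "\<delta> > 0" and h'_dec: "\<And>u. 0 < u \<Longrightarrow> u < \<delta> \<Longrightarrow> h' u < h' 0"
    using DERIV_neg_dec_right[OF deriv2 \<open>h'' < 0\<close>] by auto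
  have "h u < h 0" if u: "0 < u" "u < \<delta>" for u
  proof -
    obtain z where z: "0 < z" "z < u" "h u - h 0 = (u - 0) * h' z"
      using MVT2[OF \<open>0 < u\<close>] deriv by blast
    have "h' z < 0" using h'_dec[of z] z u \<open>h' 0 \<le> 0\<close> by linarith
    then have "u * h' z < 0" using u by (simp add: mult_pos_neg)
    with z show ?thesis by simp
  qed
  with \<open>\<delta> > 0\<close> show thesis by (rule that)
qed

lemma continuous_less_persists:
  fixes h :: "real \<Rightarrow> real"
  assumes cont: "continuous_on {0..t} h"
    and "\<delta> > 0" and start: "\<And>u. 0 < u \<Longrightarrow> u < \<delta> \<Longrightarrow> h u < h 0"
    and no_return: "\<And>s. 0 < s \<Longrightarrow> s \<le> t \<Longrightarrow> h s \<noteq> h 0"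
    and s: "0 < s" "s \<le> t"
  shows "h s < h 0"
proof (rule ccontr)
  assume "\<not> h s < h 0"
  define u where "u = min (\<delta> / 2) s"
  have u: "0 < u" "u < \<delta>" "u \<le> s" using \<open>\<delta> > 0\<close> s by (auto simp: u_def)
  have "continuous_on {u..s} h" by (rule continuous_on_subset[OF cont]) (use u s in auto)
  then obtain z where "u \<le> z" "z \<le> s" "h z = h 0"
    using IVT'[of h u "h 0" s] start[OF u(1,2)] \<open>\<not> h s < h 0\<close> u by force
  with no_return[of z] u s show False by linarith
qed

lemma cubic_model_decrease:
  fixes h h' :: "real \<Rightarrow> real"
  assumes deriv: "\<And>s. (h has_real_derivative h' s) (at s)"
    and deriv2: "(h' has_real_derivative - \<kappa>) (at 0)" and "\<kappa> > 0" and "h' 0 \<le> 0"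
    and cubic: "\<And>s. 0 < s \<Longrightarrow> s \<le> t \<Longrightarrow> h s \<le> h 0 \<Longrightarrow>
                  h s \<le> h 0 + s * h' 0 - \<kappa> / 2 * s^2 + LH / 6 * \<kappa> * s^3"
    and "LH > 0" "0 \<le> eta" "0 < t" "t < 3 * (1 - 2 * eta) / LH"
  shows "h t < h 0 - eta * \<kappa> * t^2"
proof -
  have strict: "h s < h 0 - eta * \<kappa> * s^2" if s: "0 < s" "s \<le> t" "h s \<le> h 0" for s
  proof -
    have "LH * s \<le> LH * t" using s \<open>LH > 0\<close> by simp
    also have "\<dots> < 3 * (1 - 2 * eta)"
      using \<open>t < _\<close> \<open>LH > 0\<close> by (simp add: less_divide_eq mult.commute)
    finally have "LH * s < 3 * (1 - 2 * eta)" .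
    then have "eta * (\<kappa> * s^2) < (1/2 - LH / 6 * s) * (\<kappa> * s^2)"
      using s \<open>\<kappa> > 0\<close> by (intro mult_strict_right_mono) auto
    moreover have "s * h' 0 \<le> 0" using s \<open>h' 0 \<le> 0\<close> by (simp add: mult_nonneg_nonpos)
    ultimately show ?thesis
      using cubic[OF s] by (simp add: algebra_simps power2_eq_square power3_eq_cube)
  qed
  obtain \<delta> where \<delta>: "\<delta> > 0" "\<And>u. 0 < u \<Longrightarrow> u < \<delta> \<Longrightarrow> h u < h 0"
    using DERIV_second_neg_imp_less_right[OF deriv deriv2] \<open>\<kappa> > 0\<close> \<open>h' 0 \<le> 0\<close> by auto
  have cont: "continuous_on {0..t} h"
    using deriv by (meson DERIV_isCont continuous_at_imp_continuous_on)
  have no_return: "h s \<noteq> h 0" if "0 < s" "s \<le> t" for s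
  proof
    assume "h s = h 0"
    then have "h s < h 0 - eta * \<kappa> * s^2" using strict[OF that] by simp
    moreover have "eta * \<kappa> * s^2 \<ge> 0" using \<open>0 \<le> eta\<close> \<open>\<kappa> > 0\<close> by simp
    ultimately show False using \<open>h s = h 0\<close> by linarith
  qed
  have "h t < h 0"
    using continuous_less_persists[OF cont \<delta> no_return \<open>0 < t\<close> order_refl] .
  then show ?thesis using strict \<open>0 < t\<close> by simp
qed

lemma has_real_derivative_along_line:
  fixes F :: "'a::real_normed_vector \<Rightarrow> real"
  assumes "(F has_derivative F') (at (x + s *\<^sub>R v))"
  shows "((\<lambda>t. F (x + t *\<^sub>R v)) has_real_derivative F' v) (at s)"
proof -
  have "((\<lambda>t. x + t *\<^sub>R v) has_derivative (\<lambda>u. u *\<^sub>R v)) (at s)"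
    by (auto intro!: derivative_eq_intros)
  from has_derivative_compose[OF this assms] have
    "((\<lambda>t. F (x + t *\<^sub>R v)) has_derivative (\<lambda>u. F' (u *\<^sub>R v))) (at s)" .
  then show ?thesis
    using assms by (auto intro: has_derivative_imp_has_field_derivative
        simp: linear_scale_real has_derivative_linear linear_scale)
qed

lemma has_real_derivative_inner_along_line:
  fixes F :: "'a::real_normed_vector \<Rightarrow> 'b::real_inner"
  assumes "(F has_derivative F') (at (x + s *\<^sub>R v))"
  shows "((\<lambda>t. F (x + t *\<^sub>R v) \<bullet> w) has_real_derivative F' v \<bullet> w) (at s)"
proof -
  have "((\<lambda>y. F y \<bullet> w) has_derivative (\<lambda>h. F' h \<bullet> w)) (at (x + s *\<^sub>R v))"
    using assms by (auto intro!: derivative_eq_intros)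
  then show ?thesis by (rule has_real_derivative_along_line)
qed

lemma l1norm_add_dominated:
  assumes "\<And>i. \<bar>v$i\<bar> \<le> \<bar>x$i\<bar>"
  shows "l1norm (x + v) = l1norm x + (\<chi> i. sgn (x$i)) \<bullet> v"
proof -
  have "\<bar>x$i + v$i\<bar> = \<bar>x$i\<bar> + sgn (x$i) * v$i" for i
    using assms[of i] by (cases "x$i" "0::real" rule: linorder_cases) (auto simp: abs_if)
  then show ?thesis
    unfolding l1norm_def inner_vec_def by (simp add: sum.distrib)
qed

lemma negative_curvature_rescaling:
  fixes H :: "'a::real_inner \<Rightarrow> 'a" and d g :: 'a
  assumes "linear H" and "0 \<le> eps" and curv: "d \<bullet> H d < - eps * (norm d)^2"
  defines "v \<equiv> (- sgn1 (d \<bullet> g) * \<bar>d \<bullet> H d\<bar> / (norm d)^2 / norm d) *\<^sub>R d"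
  shows "norm v > eps" and "v \<bullet> H v = - (norm v ^ 3)" and "g \<bullet> v \<le> 0"
proof -
  define q where "q = d \<bullet> H d"
  define c where "c = - sgn1 (d \<bullet> g) * \<bar>q\<bar> / (norm d)^2 / norm d"
  have "eps * (norm d)^2 \<ge> 0" using \<open>0 \<le> eps\<close> by simp
  then have "q < 0" using curv unfolding q_def by linarith
  then have "d \<noteq> 0" unfolding q_def by auto
  have v: "v = c *\<^sub>R d" unfolding v_def c_def q_def ..
  have abs_c: "\<bar>c\<bar> = - q / norm d ^ 3"
    using \<open>q < 0\<close> unfolding c_def sgn1_def by (simp add: abs_mult power3_eq_cube power2_eq_square)
  have norm_v: "norm v = - q / (norm d)^2"
    using \<open>d \<noteq> 0\<close> unfolding v norm_scaleR abs_c by (simp add: power3_eq_cube power2_eq_square)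
  show "norm v > eps"
    using curv \<open>d \<noteq> 0\<close> unfolding norm_v q_def by (simp add: less_divide_eq field_simps)
  have "v \<bullet> H v = \<bar>c\<bar>^2 * q"
    unfolding v q_def by (simp add: real_vector.linear_scale[OF \<open>linear H\<close>] power2_eq_square)
  also have "\<dots> = - (norm v ^ 3)"
    unfolding abs_c norm_v using \<open>d \<noteq> 0\<close> by (simp add: field_simps power3_eq_cube power2_eq_square)
  finally show "v \<bullet> H v = - (norm v ^ 3)" .
  have "g \<bullet> v = - (\<bar>q\<bar> / (norm d)^2 / norm d) * (sgn1 (d \<bullet> g) * (d \<bullet> g))"
    unfolding v c_def by (simp add: inner_commute)
  moreover have "sgn1 (d \<bullet> g) * (d \<bullet> g) \<ge> 0" by (simp add: sgn1_def)
  ultimately show "g \<bullet> v \<le> 0" by (simp add: mult_nonneg_nonneg)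
qed

definition supported_on :: "'n set \<Rightarrow> real^'n \<Rightarrow> bool" where
  "supported_on I v \<longleftrightarrow> (\<forall>i. i \<notin> I \<longrightarrow> v$i = 0)"

lemma supported_on_zero: "supported_on I 0"
  and supported_on_add: "supported_on I u \<Longrightarrow> supported_on I v \<Longrightarrow> supported_on I (u + v)"
  and supported_on_diff: "supported_on I u \<Longrightarrow> supported_on I v \<Longrightarrow> supported_on I (u - v)"
  and supported_on_uminus: "supported_on I u \<Longrightarrow> supported_on I (- u)"
  and supported_on_scaleR: "supported_on I u \<Longrightarrow> supported_on I (c *\<^sub>R u)"
  by (auto simp: supported_on_def)

lemma supported_on_restrict_vec: "supported_on I (restrict_vec I v)"
  by (simp add: supported_on_def restrict_vec_def)

lemma restrict_vec_supported: "supported_on I v \<Longrightarrow> restrict_vec I v = v"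
  by (auto simp: supported_on_def restrict_vec_def vec_eq_iff)

lemma inner_restrict_vec: "supported_on I u \<Longrightarrow> u \<bullet> restrict_vec I v = u \<bullet> v"
  unfolding supported_on_def restrict_vec_def inner_vec_def by (intro sum.cong) auto

lemma inner_sub_op:
  "supported_on I u \<Longrightarrow> supported_on I v \<Longrightarrow> u \<bullet> sub_op A I v = u \<bullet> (A *v v)"
  by (simp add: sub_op_def inner_restrict_vec restrict_vec_supported)

lemma inner_restrict_geps:
  assumes "0 \<le> eg" and v: "supported_on (Inzeps eg x) v"
  shows "restrict_vec (Inzeps eg x) (geps gf lam eg x) \<bullet> v
           = gf x \<bullet> v + lam * ((\<chi> i. sgn (x$i)) \<bullet> v)"
proof -
  have "restrict_vec (Inzeps eg x) (geps gf lam eg x) $ i * v$i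
          = gf x $ i * v$i + lam * (sgn (x$i) * v$i)" for i
  proof (cases "i \<in> Inzeps eg x")
    case True
    have "sqrt eg \<ge> 0" using \<open>0 \<le> eg\<close> by simp
    with True consider "x$i > sqrt eg" "x$i > 0" | "x$i < - sqrt eg" "\<not> x$i > sqrt eg" "x$i < 0"
      by (force simp: Inzeps_def)
    then show ?thesis by cases (simp_all add: True restrict_vec_def geps_def algebra_simps)
  next
    case False
    with v show ?thesis by (simp add: supported_on_def)
  qed
  then show ?thesis
    unfolding inner_vec_def by (simp add: sum.distrib sum_distrib_left)
qed

lemma l1norm_add_small_supported:
  assumes "supported_on (Inzeps eg x) v" "0 \<le> t" "t * norm v \<le> sqrt eg"
  shows "l1norm (x + t *\<^sub>R v) = l1norm x + t * ((\<chi> i. sgn (x$i)) \<bullet> v)"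
proof -
  have "\<bar>(t *\<^sub>R v)$i\<bar> \<le> \<bar>x$i\<bar>" for i
  proof (cases "i \<in> Inzeps eg x")
    case True
    have "\<bar>(t *\<^sub>R v)$i\<bar> \<le> t * norm v"
      using assms(2) component_le_norm_cart[of v i] by (simp add: abs_mult mult_left_mono)
    with True assms(3) show ?thesis by (simp add: Inzeps_def)
  next
    case False
    with assms(1) show ?thesis by (simp add: supported_on_def)
  qed
  then show ?thesis by (simp add: l1norm_add_dominated)
qed

lemma ccg_iter_supported:
  assumes "supported_on I g" and Hb: "\<And>v. supported_on I v \<Longrightarrow> supported_on I (Hb v)"
  shows "supported_on I (fst (ccg_iter Hb g j)) \<and> supported_on I (fst (snd (ccg_iter Hb g j)))
         \<and> supported_on I (snd (snd (ccg_iter Hb g j)))"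
proof (induction j)
  case 0
  then show ?case using assms(1) by (simp add: supported_on_zero supported_on_uminus)
next
  case (Suc j)
  obtain y r p where yrp: "ccg_iter Hb g j = (y, r, p)" by (cases "ccg_iter Hb g j") auto
  with Suc have "supported_on I y" "supported_on I r" "supported_on I p" "supported_on I (Hb p)"
    using Hb by auto
  with yrp show ?case
    by (simp add: Let_def supported_on_add supported_on_diff supported_on_scaleR supported_on_uminus)
qed

lemma capped_cg_NC_curvature:
  assumes "capped_cg H g eps zeta delta taubar M d NC"
  shows "d \<bullet> (H d + (taubar * norm g powr delta) *\<^sub>R d) < eps * (norm d)^2"
proof -
  define Hb where "Hb = (\<lambda>v. H v + (taubar * norm g powr delta) *\<^sub>R v)"
  define curv where "curv v \<longleftrightarrow> v \<bullet> Hb v < eps * (norm v)^2" for v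
  have "curv d"
    using assms unfolding capped_cg_def Let_def curv_def[symmetric] Hb_def[symmetric]
    by (fastforce split: if_splits simp del: ccg_iter.simps)
  then show ?thesis by (simp add: curv_def Hb_def)
qed

lemma capped_cg_supported:
  assumes "capped_cg H g eps zeta delta taubar M d dt"
    and g: "supported_on I g" and H: "\<And>v. supported_on I v \<Longrightarrow> supported_on I (H v)"
  shows "supported_on I d"
proof -
  define Hb where "Hb = (\<lambda>v. H v + (taubar * norm g powr delta) *\<^sub>R v)"
  have "supported_on I (Hb v)" if "supported_on I v" for v
    using H[OF that] that by (simp add: Hb_def supported_on_add supported_on_scaleR)
  from ccg_iter_supported[OF g this] show ?thesis
    using assms(1)[unfolded capped_cg_def, folded Hb_def, unfolded Let_def]
    by (fastforce split: if_splits simp del: ccg_iter.simps intro: supported_on_diff)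
qed

lemma capped_cg_NC_step:
  fixes A :: "real^'n^'n" and I :: "'n set" and g d :: "real^'n"
  defines "H \<equiv> sub_op A I"
  defines "v \<equiv> restrict_vec I ((- sgn1 (d \<bullet> g) * \<bar>d \<bullet> H d\<bar> / (norm d)^2 / norm d) *\<^sub>R d)"
  assumes cg: "capped_cg H g eps zeta delta taubar M d NC"
    and g: "supported_on I g" and "0 \<le> eps" and shift: "2 * eps \<le> taubar * norm g powr delta"
  shows "supported_on I v" and "norm v > eps" and "v \<bullet> (A *v v) = - (norm v ^ 3)" and "g \<bullet> v \<le> 0"
proof -
  have d: "supported_on I d"
    using capped_cg_supported[OF cg g] by (simp add: H_def sub_op_def supported_on_restrict_vec)
  have dHd: "d \<bullet> H d = d \<bullet> (A *v d)" using d by (simp add: H_def inner_sub_op)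
  have v: "v = (- sgn1 (d \<bullet> g) * \<bar>d \<bullet> (A *v d)\<bar> / (norm d)^2 / norm d) *\<^sub>R d"
    unfolding v_def dHd by (intro restrict_vec_supported supported_on_scaleR d)
  then show "supported_on I v" by (simp only: supported_on_scaleR d)
  have "d \<bullet> H d + (taubar * norm g powr delta) * (norm d)^2 < eps * (norm d)^2"
    using capped_cg_NC_curvature[OF cg] by (simp add: inner_add_right power2_norm_eq_inner)
  moreover have "2 * eps * (norm d)^2 \<le> (taubar * norm g powr delta) * (norm d)^2"
    using shift by (simp add: mult_right_mono)
  ultimately have "d \<bullet> (A *v d) < - eps * (norm d)^2"
    unfolding dHd by linarith
  from negative_curvature_rescaling[OF matrix_vector_mul_linear \<open>0 \<le> eps\<close> this]
  show "norm v > eps" "v \<bullet> (A *v v) = - (norm v ^ 3)" "g \<bullet> v \<le> 0"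
    unfolding v by auto
qed

lemma l1_regularized_negative_curvature_decrease:
  fixes f :: "real^'n \<Rightarrow> real" and gf :: "real^'n \<Rightarrow> real^'n" and H :: "real^'n^'n"
    and lam eg LH eta s :: real and x0 x v :: "real^'n"
  defines "phi \<equiv> (\<lambda>x. f x + lam * l1norm x)"
  defines "I \<equiv> Inzeps eg x"
  assumes f_grad: "\<And>y. (f has_derivative (\<lambda>h. gf y \<bullet> h)) (at y)"
    and f_hess: "(gf has_derivative (\<lambda>h. H *v h)) (at x)"
    and cubic_bd: "\<And>y. y \<in> level_set phi x0 \<Longrightarrow>
          f y \<le> f x + gf x \<bullet> (y - x) + 1/2 * ((y - x) \<bullet> (H *v (y - x))) + LH / 6 * (norm (y - x))^3"
    and x_lev: "x \<in> level_set phi x0"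
    and "0 \<le> eg" and v_supp: "supported_on I v"
    and v_curv: "v \<bullet> (H *v v) = - (norm v ^ 3)" and "v \<noteq> 0"
    and v_desc: "restrict_vec I (geps gf lam eg x) \<bullet> v \<le> 0"
    and "LH > 0" "0 \<le> eta"
    and step: "0 < s" "s * norm v \<le> sqrt eg" "s < 3 * (1 - 2 * eta) / LH"
  shows "phi (x + s *\<^sub>R v) < phi x - eta * norm v ^ 3 * s^2"
proof -
  define \<sigma> :: "real^'n" where "\<sigma> = (\<chi> i. sgn (x$i))"
  define h where "h t = f (x + t *\<^sub>R v) + lam * (l1norm x + t * (\<sigma> \<bullet> v))" for t
  define h' where "h' t = gf (x + t *\<^sub>R v) \<bullet> v + lam * (\<sigma> \<bullet> v)" for t
  have phi_h: "phi (x + t *\<^sub>R v) = h t" if "0 \<le> t" "t \<le> s" for t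
  proof -
    have "t * norm v \<le> sqrt eg"
      using that \<open>s * norm v \<le> sqrt eg\<close> by (meson mult_right_mono norm_ge_zero order_trans)
    with v_supp \<open>0 \<le> t\<close> show ?thesis
      by (simp add: phi_def h_def \<sigma>_def I_def l1norm_add_small_supported)
  qed
  have h0: "h 0 = phi x" by (simp add: h_def phi_def)
  have h'0: "h' 0 = restrict_vec I (geps gf lam eg x) \<bullet> v"
    by (simp add: h'_def \<sigma>_def I_def inner_restrict_geps[OF \<open>0 \<le> eg\<close> v_supp[unfolded I_def]])
  have deriv: "(h has_real_derivative h' t) (at t)" for t
    using has_real_derivative_along_line[OF f_grad]
    unfolding h_def h'_def by (auto intro!: derivative_eq_intros)
  have deriv2: "(h' has_real_derivative - (norm v ^ 3)) (at 0)"
    using has_real_derivative_inner_along_line[of gf _ x 0 v v] f_hess v_curv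
    unfolding h'_def by (auto intro!: derivative_eq_intros simp: inner_commute)
  have cubic: "h t \<le> h 0 + t * h' 0 - norm v ^ 3 / 2 * t^2 + LH / 6 * norm v ^ 3 * t^3"
    if t: "0 < t" "t \<le> s" "h t \<le> h 0" for t
  proof -
    have "x + t *\<^sub>R v \<in> level_set phi x0"
      using t x_lev phi_h[of t] h0 by (auto simp: level_set_def)
    from cubic_bd[OF this]
    have "f (x + t *\<^sub>R v) \<le> f x + t * (gf x \<bullet> v) - norm v ^ 3 / 2 * t^2 + LH / 6 * norm v ^ 3 * t^3"
      using t v_curv by (simp add: matrix_vector_mult_scaleR power_mult_distrib power2_eq_square mult_ac)
    then show ?thesis by (simp add: h_def h'_def algebra_simps)
  qed
  have "h s < h 0 - eta * norm v ^ 3 * s^2"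
    using \<open>v \<noteq> 0\<close> h'0 v_desc \<open>LH > 0\<close> \<open>0 \<le> eta\<close> step
    by (intro cubic_model_decrease[OF deriv deriv2 _ _ cubic]) auto
  then show ?thesis using phi_h[of s] h0 \<open>0 < s\<close> by simp
qed

lemma backtracking_sufficient_decrease:
  fixes phi :: "'a::real_vector \<Rightarrow> real" and x d :: 'a
  assumes "0 < theta" "theta < 1" "0 < T" "0 \<le> c"
    and decrease: "\<And>s. 0 < s \<Longrightarrow> s < T \<Longrightarrow> phi (x + s *\<^sub>R d) < phi x - c * s^2"
  defines "j \<equiv> LEAST j. phi (x + theta^j *\<^sub>R d) < phi x - c * theta^(2*j)"
  shows "\<exists>j. phi (x + theta^j *\<^sub>R d) < phi x - c * theta^(2*j)"
    and "phi x - phi (x + theta^j *\<^sub>R d) \<ge> c * theta^2 * min 1 (T^2)"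
proof -
  define P where "P j \<longleftrightarrow> phi (x + theta^j *\<^sub>R d) < phi x - c * theta^(2*j)" for j
  have pow2: "theta^(2*j) = (theta^j)^2" for j by (simp add: power_mult mult.commute)
  have P_small: "P j" if "theta^j < T" for j
    using decrease[of "theta^j"] that \<open>0 < theta\<close> by (simp add: P_def pow2)
  obtain j0 where "theta^j0 < T" using real_arch_pow_inv[OF \<open>0 < T\<close> \<open>theta < 1\<close>] by blast
  then show ex: "\<exists>j. phi (x + theta^j *\<^sub>R d) < phi x - c * theta^(2*j)"
    using P_small unfolding P_def by blast
  have "P j" unfolding j_def P_def using ex by (rule LeastI_ex)
  have "c * theta^2 * min 1 (T^2) \<le> c * theta^(2*j)"
  proof (cases j)
    case 0
    have "theta^2 * min 1 (T^2) \<le> 1 * 1"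
      using \<open>0 < theta\<close> \<open>theta < 1\<close> by (intro mult_mono) (auto simp: power_le_one)
    with 0 \<open>0 \<le> c\<close> show ?thesis by (simp add: mult_left_le mult.assoc)
  next
    case (Suc m)
    then have "\<not> P m" using not_less_Least[of m P] unfolding j_def P_def[abs_def] by auto
    then have "T \<le> theta^m" using P_small not_le by blast
    then have "min 1 (T^2) \<le> (theta^m)^2" using \<open>0 < T\<close> by (simp add: power_mono min.coboundedI2)
    then have "theta^2 * min 1 (T^2) \<le> theta^2 * (theta^m)^2" by (simp add: mult_left_mono)
    also have "\<dots> = theta^(2*j)" using Suc by (simp add: pow2 power_mult_distrib power2_eq_square)
    finally have "theta^2 * min 1 (T^2) \<le> theta^(2*j)" .
    with \<open>0 \<le> c\<close> show ?thesis by (simp add: mult_left_mono mult.assoc)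
  qed
  with \<open>P j\<close> show "phi x - phi (x + theta^j *\<^sub>R d) \<ge> c * theta^2 * min 1 (T^2)"
    unfolding P_def by linarith
qed

lemma min_step_length_bound:
  fixes eg eh a C :: real
  assumes "0 < eh" "eh < a" "0 < eg" "0 < C"
  shows "min 1 (C^2) * min (eg * eh) (eh^3) \<le> eh * a^2 * min 1 ((min (sqrt eg / a) C)^2)"
proof -
  define T where "T = min (sqrt eg / a) C"
  have "a * T = sqrt eg \<or> a * T = a * C" using assms by (auto simp: T_def min_def)
  then have aT: "(a * T)^2 = eg \<or> (a * T)^2 = (a * C)^2" using assms by auto
  have "min 1 (C^2) * min (eg * eh) (eh^3) \<le> eh * min (eh^2) (min eg ((eh * C)^2))"
    using assms by (auto simp: min_def power2_eq_square power3_eq_cube mult_ac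
        intro: mult_left_le_one_le mult_le_one)
  also have "\<dots> \<le> eh * min (a^2) ((a * T)^2)"
  proof -
    have "eh^2 \<le> a^2" "(eh * C)^2 \<le> (a * C)^2"
      using assms by (auto intro!: power_mono mult_right_mono)
    with aT show ?thesis using assms by (auto intro!: mult_left_mono simp: min_le_iff_disj)
  qed
  also have "\<dots> = eh * a^2 * min 1 (T^2)"
    using assms by (simp add: min_mult_distrib_left power_mult_distrib mult.assoc)
  finally show ?thesis unfolding T_def .
qed

lemma negative_curvature_backtracking_decrease:
  fixes f :: "real^'n \<Rightarrow> real" and gf :: "real^'n \<Rightarrow> real^'n" and H :: "real^'n^'n"
    and lam eg eh eta theta LH :: real and x0 x v :: "real^'n"
  defines "phi \<equiv> (\<lambda>x. f x + lam * l1norm x)"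
  defines "I \<equiv> Inzeps eg x"
  defines "j \<equiv> LEAST j. phi (x + theta^j *\<^sub>R v) < phi x - eta * theta^(2*j) * eh * (norm v)^2"
  assumes f_grad: "\<And>y. (f has_derivative (\<lambda>h. gf y \<bullet> h)) (at y)"
    and f_hess: "(gf has_derivative (\<lambda>h. H *v h)) (at x)"
    and cubic_bd: "\<And>y. y \<in> level_set phi x0 \<Longrightarrow>
          f y \<le> f x + gf x \<bullet> (y - x) + 1/2 * ((y - x) \<bullet> (H *v (y - x))) + LH / 6 * (norm (y - x))^3"
    and x_lev: "x \<in> level_set phi x0"
    and "0 < eg" "0 < eh" "0 < eta" "eta < 1/2" "0 < theta" "theta < 1" "LH > 0"
    and v_supp: "supported_on I v" and v_norm: "norm v > eh"
    and v_curv: "v \<bullet> (H *v v) = - (norm v ^ 3)"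
    and v_desc: "restrict_vec I (geps gf lam eg x) \<bullet> v \<le> 0"
  shows "(\<exists>j. phi (x + theta^j *\<^sub>R v) < phi x - eta * theta^(2*j) * eh * (norm v)^2)
     \<and> phi x - phi (x + theta^j *\<^sub>R v)
         \<ge> eta * theta^2 * min 1 (9 * (1 - 2*eta)^2 / LH^2) * min (eg * eh) (eh^3)"
proof -
  have "norm v > 0" using v_norm \<open>0 < eh\<close> by linarith
  define C where "C = 3 * (1 - 2 * eta) / LH"
  define T where "T = min (sqrt eg / norm v) C"
  define c where "c = eta * eh * (norm v)^2"
  have "C > 0" using \<open>eta < 1/2\<close> \<open>LH > 0\<close> by (simp add: C_def)
  have decrease: "phi (x + s *\<^sub>R v) < phi x - c * s^2" if s: "0 < s" "s < T" for s
  proof -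
    have "s < sqrt eg / norm v" using s(2) by (simp add: T_def)
    then have "s * norm v \<le> sqrt eg" using \<open>norm v > 0\<close> by (simp add: pos_less_divide_eq)
    moreover have "v \<noteq> 0" using \<open>norm v > 0\<close> by auto
    ultimately have "phi (x + s *\<^sub>R v) < phi x - eta * norm v ^ 3 * s^2"
      using l1_regularized_negative_curvature_decrease[where gf = gf,
          OF f_grad f_hess cubic_bd[unfolded phi_def] x_lev[unfolded phi_def]
          _ v_supp[unfolded I_def] v_curv _ v_desc[unfolded I_def]
          \<open>LH > 0\<close> _ s(1)] \<open>0 < eg\<close> \<open>0 < eta\<close> s(2)
      by (simp add: phi_def T_def C_def)
    moreover have "c * s^2 \<le> eta * norm v ^ 3 * s^2"
      using v_norm \<open>0 < eh\<close> \<open>0 < eta\<close>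
      by (simp add: c_def power3_eq_cube power2_eq_square mult_right_mono)
    ultimately show ?thesis by linarith
  qed
  have "T > 0" using \<open>C > 0\<close> \<open>norm v > 0\<close> \<open>0 < eg\<close> by (simp add: T_def)
  have "c \<ge> 0" using \<open>0 < eta\<close> \<open>0 < eh\<close> by (simp add: c_def)
  note backtrack = backtracking_sufficient_decrease[of theta T c phi x v,
      OF \<open>0 < theta\<close> \<open>theta < 1\<close> \<open>T > 0\<close> \<open>c \<ge> 0\<close> decrease]
  have armijo: "eta * theta^(2*j) * eh * (norm v)^2 = c * theta^(2*j)" for j
    by (simp add: c_def mult_ac)
  have "min 1 (C^2) * min (eg * eh) (eh^3) \<le> eh * (norm v)^2 * min 1 (T^2)"
    unfolding T_def using \<open>0 < eh\<close> v_norm \<open>0 < eg\<close> \<open>C > 0\<close> by (rule min_step_length_bound)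
  from mult_left_mono[OF this, of "eta * theta^2"] \<open>0 < eta\<close>
  have "eta * theta^2 * min 1 (C^2) * min (eg * eh) (eh^3) \<le> c * theta^2 * min 1 (T^2)"
    by (simp add: c_def mult_ac)
  moreover have "C^2 = 9 * (1 - 2*eta)^2 / LH^2"
    unfolding C_def power_divide power_mult_distrib by simp
  ultimately show ?thesis
    using backtrack unfolding j_def armijo by simp
qed

theorem lemma9:
  fixes f :: "real^'n \<Rightarrow> real" and gf :: "real^'n \<Rightarrow> real^'n" and Hf :: "real^'n \<Rightarrow> real^'n^'n"
    and lam eg eh delta tauhat zeta eta theta Lg LH tauk M :: real
    and x0 xk d :: "real^'n"
  defines "phi \<equiv> (\<lambda>x. f x + lam * l1norm x)"
  defines "I \<equiv> Inzeps eg xk"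
  defines "gk \<equiv> restrict_vec I (geps gf lam eg xk)"
  defines "Hk \<equiv> sub_op (Hf xk) I"
  defines "dk \<equiv> restrict_vec I
             ((- sgn1 (d \<bullet> gk) * \<bar>d \<bullet> Hk d\<bar> / (norm d)^2 / norm d) *\<^sub>R d)"
  defines "jk \<equiv> (LEAST j::nat. phi (xk + theta^j *\<^sub>R dk) < phi xk - eta * theta^(2*j) * eh * (norm dk)^2)"
  assumes lam: "lam > 0"
    and f_grad: "\<forall>x. (f has_derivative (\<lambda>h. gf x \<bullet> h)) (at x)"
    and f_hess: "\<forall>x. (gf has_derivative (\<lambda>h. Hf x *v h)) (at x)"
    and hess_cont: "continuous_on UNIV Hf"
    and lev_bdd: "bounded (level_set phi x0)"
    and lip_nbhd: "\<exists>U. open U \<and> level_set phi x0 \<subseteq> U \<and>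
                     (\<exists>L. \<forall>x\<in>U. \<forall>y\<in>U. onorm (\<lambda>v. (Hf x - Hf y) *v v) \<le> L * norm (x - y))"
    and Lg_pos: "Lg > 0" and LH_pos: "LH > 0"
    and Lg_bd: "\<forall>x\<in>level_set phi x0. onorm (\<lambda>v. Hf x *v v) \<le> Lg"
    and LH_bd: "\<forall>x\<in>level_set phi x0. \<forall>y\<in>level_set phi x0.
                  f y \<le> f x + gf x \<bullet> (y - x) + 1/2 * ((y - x) \<bullet> (Hf x *v (y - x)))
                        + LH / 6 * (norm (y - x))^3"
    and eg: "0 < eg" "eg < 1" and eh: "0 < eh" "eh < 1"
    and delta: "0 \<le> delta" "delta \<le> 1" and tauhat: "tauhat \<ge> 1"
    and zeta: "0 < zeta" "zeta < 1" and eta: "0 < eta" "eta < (1 - zeta) / 2"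
    and theta: "0 < theta" "theta < 1"
    and xk_lev: "xk \<in> level_set phi x0"
    and inv1: "I0eps eg xk = {} \<or> (\<forall>i\<in>I0eps eg xk. geps gf lam eg xk $ i = 0)"
    and inv2: "I \<noteq> {}"
    and inv3: "norm gk > eg"
    and tauk: "2 * eh / norm gk powr delta \<le> tauk" "tauk \<le> 2 * tauhat * eh / norm gk powr delta"
    and M: "M \<ge> 0"
    and cg: "capped_cg Hk gk eh zeta delta tauk M d NC"
  shows "(\<exists>j::nat. phi (xk + theta^j *\<^sub>R dk) < phi xk - eta * theta^(2*j) * eh * (norm dk)^2)
     \<and> phi xk - phi (xk + theta^jk *\<^sub>R dk)
         \<ge> eta * theta^2 * min 1 (9 * (1 - 2*eta)^2 / LH^2) * min (eg * eh) (eh^3)"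
proof -
  have "norm gk > 0" using inv3 eg(1) by linarith
  then have "norm gk powr delta > 0" by simp
  with tauk(1) have shift: "2 * eh \<le> tauk * norm gk powr delta" by (simp add: divide_le_eq)
  have "supported_on I gk" unfolding gk_def by (rule supported_on_restrict_vec)
  from capped_cg_NC_step[OF cg[unfolded Hk_def] this _ shift, folded Hk_def, folded dk_def] eh(1)
  have dk: "supported_on I dk" "norm dk > eh" "dk \<bullet> (Hf xk *v dk) = - (norm dk ^ 3)" "gk \<bullet> dk \<le> 0"
    by auto
  have "eta < 1/2" using eta(2) zeta(1) by (simp add: field_simps)
  from negative_curvature_backtracking_decrease[where gf = gf,
      OF f_grad[rule_format] f_hess[rule_format, of xk]
      LH_bd[unfolded phi_def, rule_format, OF xk_lev[unfolded phi_def]] xk_lev[unfolded phi_def]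
      eg(1) eh(1) eta(1) this theta LH_pos dk[unfolded I_def gk_def]]
  show ?thesis unfolding jk_def phi_def I_def .
qed

end
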